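(* Let $\mathbb{F}$ be a field of characteristic $2$. Then the identity matrix $I\in\mathfrak{gl}(n,\mathbb{F})$ can be written as a finite sum of matrices $N\in\mathfrak{gl}(n,\mathbb{F})$ with $N^2=0$ if and only if $n$ is even. *)

theory Defs
  imports "HOL-Analysis.Analysis"
begin

end

theory Submission
  imports Defs
begin

text \<open>
  In characteristic 2 the off-diagonal terms of \<open>trace (N ** N) = (\<Sum>i j. N$i$j * N$j$i)\<close>
  cancel in pairs, as do those of \<open>(trace N)\<^sup>2\<close>, so both equal \<open>\<Sum>i. (N$i$i)\<^sup>2\<close>.
  Hence a square-zero matrix has trace 0, and a sum of such matrices can only be the
  identity, of trace \<open>n\<close>, if \<open>n = 0\<close> in the field, i.e. if \<open>n\<close> is even.
  Conversely, for even \<open>n\<close> pair up the indices by an involution \<open>\<sigma>\<close>, colouring the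
  two members of each pair differently, and let \<open>P\<close> be the permutation matrix of \<open>\<sigma>\<close>.
  Then \<open>(I + P)\<^sup>2 = 2(I + P) = 0\<close>, and \<open>P = B + C\<close> where \<open>B\<close> and \<open>C\<close> keep the rows
  of one colour each and square to zero; so \<open>I = (I + P) + B + C\<close>.
\<close>

lemma two_eq_zero_CHAR_2:
  assumes "CHAR('a::semiring_1) = 2"
  shows "(2::'a) = 0"
  by (metis assms of_nat_CHAR of_nat_numeral)

lemma sum_sum_symmetric_CHAR_2:
  fixes x :: "'b \<Rightarrow> 'b \<Rightarrow> 'a::semiring_1"
  assumes char: "CHAR('a) = 2" and "finite S" and sym: "\<And>i j. x i j = x j i"
  shows "(\<Sum>i\<in>S. \<Sum>j\<in>S. x i j) = (\<Sum>i\<in>S. x i i)"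
  using \<open>finite S\<close>
proof (induction S rule: finite_induct)
  case (insert a S)
  have "(\<Sum>i\<in>insert a S. \<Sum>j\<in>insert a S. x i j)
      = x a a + ((\<Sum>j\<in>S. x a j) + (\<Sum>i\<in>S. x i a)) + (\<Sum>i\<in>S. \<Sum>j\<in>S. x i j)"
    using insert.hyps by (simp add: sum.distrib algebra_simps)
  also have "(\<Sum>j\<in>S. x a j) + (\<Sum>i\<in>S. x i a) = 0"
    using sym two_eq_zero_CHAR_2[OF char] by (simp flip: mult_2)
  finally show ?case
    using insert by simp
qed simp

lemma trace_square_CHAR_2:
  fixes A :: "'a::comm_semiring_1^'n^'n"
  assumes "CHAR('a) = 2"
  shows "trace (A ** A) = trace A ^ 2"
proof -
  have "trace (A ** A) = (\<Sum>i\<in>UNIV. \<Sum>j\<in>UNIV. A$i$j * A$j$i)"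
    by (simp add: trace_def matrix_matrix_mult_def)
  also have "\<dots> = (\<Sum>i\<in>UNIV. A$i$i * A$i$i)"
    using assms by (intro sum_sum_symmetric_CHAR_2) (auto simp: mult.commute)
  also have "\<dots> = (\<Sum>i\<in>UNIV. \<Sum>j\<in>UNIV. A$i$i * A$j$j)"
    using assms by (intro sum_sum_symmetric_CHAR_2[symmetric]) (auto simp: mult.commute)
  also have "\<dots> = trace A ^ 2"
    by (simp add: trace_def power2_eq_square sum_product)
  finally show ?thesis .
qed

lemma trace_eq_0_if_square_eq_0_CHAR_2:
  fixes N :: "'a::idom^'n^'n"
  assumes "CHAR('a) = 2" and "N ** N = 0"
  shows "trace N = 0"
  using trace_square_CHAR_2[OF assms(1), of N] assms(2) by (simp add: trace_def)

lemma trace_sum: "trace (\<Sum>i\<in>I. A i) = (\<Sum>i\<in>I. trace (A i :: 'a::semiring_1^'n^'n))"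
  by (simp add: trace_def sum_component sum.swap[of _ UNIV])

lemma matrix_add_rdistrib: "(A + B) ** C = A ** C + B ** C"
  by (vector matrix_matrix_mult_def sum.distrib[symmetric] distrib_right)

definition graph_matrix :: "('n \<Rightarrow> bool) \<Rightarrow> ('n \<Rightarrow> 'n) \<Rightarrow> 'a::zero_neq_one^'n^'n"
  where "graph_matrix S \<sigma> = (\<chi> i j. if S i \<and> j = \<sigma> i then 1 else 0)"

lemma graph_matrix_mult:
  "graph_matrix S \<sigma> ** graph_matrix T \<tau>
     = (graph_matrix (\<lambda>i. S i \<and> T (\<sigma> i)) (\<tau> \<circ> \<sigma>) :: 'a::semiring_1^'n^'n)"
  by (simp add: vec_eq_iff graph_matrix_def matrix_matrix_mult_def
      if_distrib[of "\<lambda>x. x * _"] sum.delta cong: if_cong)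

lemma graph_matrix_id: "graph_matrix (\<lambda>_. True) id = mat 1"
  by (simp add: vec_eq_iff graph_matrix_def mat_def)

lemma graph_matrix_False: "graph_matrix (\<lambda>_. False) \<sigma> = 0"
  by (simp add: vec_eq_iff graph_matrix_def)

lemma graph_matrix_add_complement:
  "graph_matrix S \<sigma> + graph_matrix (\<lambda>i. \<not> S i) \<sigma>
     = (graph_matrix (\<lambda>_. True) \<sigma> :: 'a::{zero_neq_one,monoid_add}^'n^'n)"
  by (simp add: vec_eq_iff graph_matrix_def)

lemma mat_1_eq_sum_of_square_zero_CHAR_2:
  fixes \<sigma> :: "'n::finite \<Rightarrow> 'n" and f :: "'n \<Rightarrow> bool"
  assumes char: "CHAR('a) = 2"
    and involution: "\<And>i. \<sigma> (\<sigma> i) = i" and alternating: "\<And>i. f (\<sigma> i) \<longleftrightarrow> \<not> f i"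
  obtains A B C :: "'a::semiring_1^'n^'n"
  where "A ** A = 0" "B ** B = 0" "C ** C = 0" "A + B + C = mat 1"
proof
  define P :: "'a^'n^'n" where "P = graph_matrix (\<lambda>_. True) \<sigma>"
  have double_zero: "M + M = 0" for M :: "'a^'n^'n"
    by (simp add: vec_eq_iff two_eq_zero_CHAR_2[OF char] flip: mult_2)
  have "\<sigma> \<circ> \<sigma> = id"
    using involution by auto
  then have "P ** P = mat 1"
    by (simp add: P_def graph_matrix_mult graph_matrix_id)
  then show "(mat 1 + P) ** (mat 1 + P) = 0"
    by (simp add: matrix_add_ldistrib matrix_add_rdistrib add.commute[of P] double_zero)
  show "graph_matrix f \<sigma> ** graph_matrix f \<sigma> = (0 :: 'a^'n^'n)"
       "graph_matrix (\<lambda>i. \<not> f i) \<sigma> ** graph_matrix (\<lambda>i. \<not> f i) \<sigma> = (0 :: 'a^'n^'n)"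
    by (simp_all add: graph_matrix_mult alternating graph_matrix_False)
  show "mat 1 + P + graph_matrix f \<sigma> + graph_matrix (\<lambda>i. \<not> f i) \<sigma> = mat 1"
    by (simp add: P_def add.assoc graph_matrix_add_complement double_zero)
qed

lemma even_card_obtains_alternating_involution:
  assumes "even CARD('n)"
  obtains \<sigma> :: "'n::finite \<Rightarrow> 'n" and f :: "'n \<Rightarrow> bool"
  where "\<And>i. \<sigma> (\<sigma> i) = i" "\<And>i. f (\<sigma> i) \<longleftrightarrow> \<not> f i"
proof -
  obtain g :: "'n \<Rightarrow> nat" where g: "bij_betw g UNIV {0..<CARD('n)}"
    using ex_bij_betw_finite_nat[of "UNIV :: 'n set"] by auto
  define h where "h = inv_into UNIV g"
  define partner :: "nat \<Rightarrow> nat" where "partner a = (if even a then a + 1 else a - 1)" for a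
  have partner_partner: "partner (partner a) = a" for a
    unfolding partner_def by presburger
  have "partner (g i) < CARD('n)" for i
  proof -
    have "g i < CARD('n)"
      using bij_betwE[OF g] by simp
    then show ?thesis
      using assms unfolding partner_def by presburger
  qed
  then have g_h_partner: "g (h (partner (g i))) = partner (g i)" for i
    using bij_betw_inv_into_right[OF g] by (simp add: h_def)
  have h_g: "h (g i) = i" for i
    using bij_betw_inv_into_left[OF g] by (simp add: h_def)
  show thesis
    by (rule that[of "\<lambda>i. h (partner (g i))" "\<lambda>i. even (g i)"])
      (simp_all add: g_h_partner partner_partner h_g, simp add: partner_def)
qed

theorem corollary2:
  assumes "CHAR('a::field) = 2"
  shows "(\<exists>(k::nat) (N :: nat \<Rightarrow> 'a ^ 'n ^ 'n).
            (\<forall>i<k. N i ** N i = 0) \<and> (\<Sum>i<k. N i) = mat 1)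
         \<longleftrightarrow> even CARD('n)"
proof
  assume "\<exists>(k::nat) (N :: nat \<Rightarrow> 'a ^ 'n ^ 'n).
            (\<forall>i<k. N i ** N i = 0) \<and> (\<Sum>i<k. N i) = mat 1"
  then obtain k and N :: "nat \<Rightarrow> 'a ^ 'n ^ 'n"
    where square_zero: "\<forall>i<k. N i ** N i = 0" and sum: "(\<Sum>i<k. N i) = mat 1"
    by blast
  have "of_nat CARD('n) = trace (\<Sum>i<k. N i)"
    by (simp add: sum trace_I)
  also have "\<dots> = 0"
    unfolding trace_sum using square_zero
    by (auto intro!: sum.neutral trace_eq_0_if_square_eq_0_CHAR_2[OF assms])
  finally have "CHAR('a) dvd CARD('n)"
    by (simp only: of_nat_eq_0_iff_char_dvd)
  then show "even CARD('n)"
    using assms by simp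
next
  assume "even CARD('n)"
  then obtain \<sigma> :: "'n \<Rightarrow> 'n" and f
    where "\<And>i. \<sigma> (\<sigma> i) = i" "\<And>i. f (\<sigma> i) \<longleftrightarrow> \<not> f i"
    using even_card_obtains_alternating_involution by blast
  then obtain A B C :: "'a^'n^'n"
    where "A ** A = 0" "B ** B = 0" "C ** C = 0" "A + B + C = mat 1"
    using mat_1_eq_sum_of_square_zero_CHAR_2[OF assms] by metis
  then show "\<exists>(k::nat) (N :: nat \<Rightarrow> 'a ^ 'n ^ 'n).
      (\<forall>i<k. N i ** N i = 0) \<and> (\<Sum>i<k. N i) = mat 1"
    by (intro exI[of _ 3] exI[of _ "\<lambda>i. [A, B, C] ! i"])
      (simp add: numeral_3_eq_3 less_Suc_eq add.commute add.left_commute)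
qed

end
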